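(* Let $f$ be a Boolean formula whose clauses $c$ are CNF, cardinality, XOR or NAE constraints over $x_1,\dots,x_n$, and let $F=F_f=\sum_{c}\mathrm{FE}_c$. If $a^\star\in[-1,1]^n$ is a local minimum of $F$ in $[-1,1]^n$, then $a^\star$ is a feasible solution of $F$.
   Context: Boolean values are encoded as $\pm1$, with $-1$ standing for True. Each clause $c$ is regarded as a function $\{\pm1\}^n\to\{\pm1\}$ with value $-1$ exactly when satisfied. $\mathrm{FE}_c$ is its Fourier expansion, i.e. the unique multilinear polynomial agreeing with $c$ on $\{\pm1\}^n$. Local minimum: $a$ is a local minimum of $F$ in a set $\Delta$ if there is $\delta>0$ such that $F(a)\le F(a')$ for all $a'\in\Delta$ with $\|a-a'\|_2^2\le\delta$. Feasibility: for $a\in[-1,1]^n$, let $I=\{i: a_i\in\{\pm1\}\}$. Let $F_{I\gets a_I}$ be the polynomial obtained from $F$ by fixing $x_i=a_i$ for every $i\in I$. Then $a$ is feasible if $F_{I\gets a_I}$ is a constant polynomial. *)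

theory Defs
  imports Complex_Main "HOL-Library.FuncSet"
begin

text \<open>Variables x_1..x_n are indexed by 0..<n.  A point is a function nat => real;
  only the coordinates below n matter.  -1 stands for True.\<close>

type_synonym literal = "nat \<times> bool"

definition lit_val :: "literal \<Rightarrow> (nat \<Rightarrow> real) \<Rightarrow> real" where
  "lit_val l y = (if snd l then y (fst l) else - y (fst l))"

definition lit_true :: "literal \<Rightarrow> (nat \<Rightarrow> real) \<Rightarrow> bool" where
  "lit_true l y \<longleftrightarrow> lit_val l y = -1"

datatype clause =
    CNF "literal list"
  | Card "literal list" nat
  | XOR "literal list"
  | NAE "literal list"

fun clause_lits :: "clause \<Rightarrow> literal list" where
  "clause_lits (CNF ls) = ls"
| "clause_lits (Card ls k) = ls"
| "clause_lits (XOR ls) = ls"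
| "clause_lits (NAE ls) = ls"

definition clause_vars :: "clause \<Rightarrow> nat set" where
  "clause_vars c = fst ` set (clause_lits c)"

fun clause_sat :: "clause \<Rightarrow> (nat \<Rightarrow> real) \<Rightarrow> bool" where
  "clause_sat (CNF ls) y = (\<exists>l\<in>set ls. lit_true l y)"
| "clause_sat (Card ls k) y = (k \<le> length (filter (\<lambda>l. lit_true l y) ls))"
| "clause_sat (XOR ls) y = odd (length (filter (\<lambda>l. lit_true l y) ls))"
| "clause_sat (NAE ls) y = ((\<exists>l\<in>set ls. lit_true l y) \<and> (\<exists>l\<in>set ls. \<not> lit_true l y))"

definition clause_fun :: "clause \<Rightarrow> (nat \<Rightarrow> real) \<Rightarrow> real" where
  "clause_fun c y = (if clause_sat c y then -1 else 1)"

text \<open>A multilinear polynomial is given by its coefficient function on monomials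
  (subsets S of {..<n}, monomial = product of x_i over i in S).\<close>
type_synonym mlpoly = "nat set \<Rightarrow> real"

definition mlpoly_eval :: "nat \<Rightarrow> mlpoly \<Rightarrow> (nat \<Rightarrow> real) \<Rightarrow> real" where
  "mlpoly_eval n p x = (\<Sum>S\<in>Pow {..<n}. p S * (\<Prod>i\<in>S. x i))"

definition hcube :: "nat \<Rightarrow> (nat \<Rightarrow> real) set" where
  "hcube n = {0..<n} \<rightarrow>\<^sub>E {-1, 1}"

definition FE :: "nat \<Rightarrow> ((nat \<Rightarrow> real) \<Rightarrow> real) \<Rightarrow> mlpoly" where
  "FE n g S = (if S \<subseteq> {..<n}
      then (\<Sum>y\<in>hcube n. g y * (\<Prod>i\<in>S. y i)) / 2 ^ n else 0)"

definition formula_poly :: "nat \<Rightarrow> clause list \<Rightarrow> mlpoly" where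
  "formula_poly n f S = (\<Sum>c\<leftarrow>f. FE n (clause_fun c) S)"

definition F_eval :: "nat \<Rightarrow> clause list \<Rightarrow> (nat \<Rightarrow> real) \<Rightarrow> real" where
  "F_eval n f x = mlpoly_eval n (formula_poly n f) x"

definition box :: "nat \<Rightarrow> (nat \<Rightarrow> real) set" where
  "box n = {a. \<forall>i<n. -1 \<le> a i \<and> a i \<le> 1}"

definition sqdist :: "nat \<Rightarrow> (nat \<Rightarrow> real) \<Rightarrow> (nat \<Rightarrow> real) \<Rightarrow> real" where
  "sqdist n a b = (\<Sum>i<n. (a i - b i)^2)"

definition local_min_in :: "nat \<Rightarrow> ((nat \<Rightarrow> real) \<Rightarrow> real) \<Rightarrow> (nat \<Rightarrow> real) set \<Rightarrow> (nat \<Rightarrow> real) \<Rightarrow> bool" where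
  "local_min_in n F D a \<longleftrightarrow> a \<in> D \<and>
     (\<exists>\<delta>>0. \<forall>a'\<in>D. sqdist n a a' \<le> \<delta> \<longrightarrow> F a \<le> F a')"

text \<open>Substitution x_i := a_i for i in I: the resulting polynomial in the remaining
  variables has, at monomial T (disjoint from I), coefficient
  sum over S with S - I = T of p(S) * prod_(i in S cap I) a_i.\<close>
definition mlpoly_subst :: "nat \<Rightarrow> mlpoly \<Rightarrow> nat set \<Rightarrow> (nat \<Rightarrow> real) \<Rightarrow> mlpoly" where
  "mlpoly_subst n p I a T = (if T \<subseteq> {..<n} \<and> T \<inter> I = {}
      then (\<Sum>S\<in>{S\<in>Pow {..<n}. S - I = T}. p S * (\<Prod>i\<in>S \<inter> I. a i)) else 0)"

definition mlpoly_const :: "nat \<Rightarrow> mlpoly \<Rightarrow> bool" where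
  "mlpoly_const n p \<longleftrightarrow> (\<forall>T\<subseteq>{..<n}. T \<noteq> {} \<longrightarrow> p T = 0)"

definition fixed_coords :: "nat \<Rightarrow> (nat \<Rightarrow> real) \<Rightarrow> nat set" where
  "fixed_coords n a = {i. i < n \<and> (a i = 1 \<or> a i = -1)}"

definition feasible :: "nat \<Rightarrow> mlpoly \<Rightarrow> (nat \<Rightarrow> real) \<Rightarrow> bool" where
  "feasible n p a \<longleftrightarrow> a \<in> box n \<and> mlpoly_const n (mlpoly_subst n p (fixed_coords n a) a)"

end

theory Submission imports Defs begin

text \<open>Fixing the coordinates of a local minimum a that lie on the boundary of the box leaves a
  multilinear polynomial q in the free coordinates, all strictly inside (-1, 1).  If q were not
  constant, pick a support monomial T that is maximal under inclusion, and look at the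
  2^|T| vertices a + t s (s \<in> {-1,1}^T) of a small cube around a.  Multilinearity makes the
  average of q over these vertices equal to q(a); since a is a local minimum, q is therefore
  constant on them.  On the other hand the sum of (\<Prod>i\<in>T. s i) * q(a + t s) picks out exactly
  the coefficient of T, times (2t)^|T|, by maximality of T.  For a constant function this
  signed sum vanishes, so the coefficient of T is 0, a contradiction.\<close>

lemma mlpoly_eval_subst:
  assumes I: "I \<subseteq> {..<n}" and agree: "\<forall>i\<in>I. x i = a i"
  shows "mlpoly_eval n (mlpoly_subst n p I a) x = mlpoly_eval n p x"
proof -
  let ?D = "{T\<in>Pow {..<n}. T \<inter> I = {}}"
  have "mlpoly_eval n (mlpoly_subst n p I a) x
      = (\<Sum>T\<in>?D. mlpoly_subst n p I a T * (\<Prod>i\<in>T. x i))"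
    unfolding mlpoly_eval_def
    by (rule sum.mono_neutral_right) (auto simp: mlpoly_subst_def)
  also have "\<dots> = (\<Sum>T\<in>?D. \<Sum>S\<in>{S\<in>Pow {..<n}. S - I = T}.
                    p S * (\<Prod>i\<in>S \<inter> I. a i) * (\<Prod>i\<in>S - I. x i))"
    by (rule sum.cong[OF refl]) (auto simp: mlpoly_subst_def sum_distrib_right)
  also have "\<dots> = (\<Sum>S\<in>Pow {..<n}. p S * (\<Prod>i\<in>S \<inter> I. a i) * (\<Prod>i\<in>S - I. x i))"
    by (rule sum.group) auto
  also have "\<dots> = mlpoly_eval n p x"
    unfolding mlpoly_eval_def
  proof (rule sum.cong[OF refl])
    fix S assume "S \<in> Pow {..<n}"
    then have "finite S" by (auto intro: finite_subset)
    then have "(\<Prod>i\<in>S. x i) = (\<Prod>i\<in>S \<inter> I. x i) * (\<Prod>i\<in>S - I. x i)"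
      by (rule prod.Int_Diff)
    also have "(\<Prod>i\<in>S \<inter> I. x i) = (\<Prod>i\<in>S \<inter> I. a i)"
      using agree by (intro prod.cong) auto
    finally show "p S * (\<Prod>i\<in>S \<inter> I. a i) * (\<Prod>i\<in>S - I. x i) = p S * (\<Prod>i\<in>S. x i)"
      by simp
  qed
  finally show ?thesis .
qed

definition cube_vertex :: "(nat \<Rightarrow> real) \<Rightarrow> nat set \<Rightarrow> real \<Rightarrow> (nat \<Rightarrow> real) \<Rightarrow> nat \<Rightarrow> real" where
  "cube_vertex a T t s i = (if i \<in> T then a i + t * s i else a i)"

lemma prod_cube_vertex:
  assumes "finite T" "finite U"
  shows "(\<Prod>i\<in>U. cube_vertex a T t s i)
       = (\<Prod>i\<in>U - T. a i) * (\<Prod>i\<in>T. if i \<in> U then a i + t * s i else 1)"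
proof -
  have "(\<Prod>i\<in>U. cube_vertex a T t s i)
      = (\<Prod>i\<in>U \<inter> T. cube_vertex a T t s i) * (\<Prod>i\<in>U - T. cube_vertex a T t s i)"
    by (rule prod.Int_Diff[OF assms(2)])
  also have "(\<Prod>i\<in>U \<inter> T. cube_vertex a T t s i) = (\<Prod>i\<in>{i\<in>T. i \<in> U}. a i + t * s i)"
    by (intro prod.cong) (auto simp: cube_vertex_def)
  also have "\<dots> = (\<Prod>i\<in>T. if i \<in> U then a i + t * s i else 1)"
    by (rule prod.inter_filter[OF assms(1)])
  also have "(\<Prod>i\<in>U - T. cube_vertex a T t s i) = (\<Prod>i\<in>U - T. a i)"
    by (intro prod.cong) (auto simp: cube_vertex_def)
  finally show ?thesis by simp
qed

lemma sum_cube_vertices_weighted: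
  assumes T: "finite T"
  shows "(\<Sum>s\<in>T \<rightarrow>\<^sub>E {-1,1}. (\<Prod>i\<in>T. w (s i)) * mlpoly_eval n q (cube_vertex a T t s))
       = (\<Sum>U\<in>Pow {..<n}. q U * (\<Prod>i\<in>U - T. a i) *
            (\<Prod>i\<in>T. \<Sum>v\<in>{-1,1}. w v * (if i \<in> U then a i + t * v else 1)))"
proof -
  have "(\<Sum>s\<in>T \<rightarrow>\<^sub>E {-1,1}. (\<Prod>i\<in>T. w (s i)) * mlpoly_eval n q (cube_vertex a T t s))
      = (\<Sum>s\<in>T \<rightarrow>\<^sub>E {-1,1}. \<Sum>U\<in>Pow {..<n}. q U * (\<Prod>i\<in>U - T. a i) *
            (\<Prod>i\<in>T. w (s i) * (if i \<in> U then a i + t * s i else 1)))"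
    unfolding mlpoly_eval_def sum_distrib_left
    by (intro sum.cong refl)
       (auto simp: prod_cube_vertex[OF T] prod.distrib finite_subset[of _ "{..<n}"])
  also have "\<dots> = (\<Sum>U\<in>Pow {..<n}. \<Sum>s\<in>T \<rightarrow>\<^sub>E {-1,1}. q U * (\<Prod>i\<in>U - T. a i) *
            (\<Prod>i\<in>T. w (s i) * (if i \<in> U then a i + t * s i else 1)))"
    by (rule sum.swap)
  also have "\<dots> = (\<Sum>U\<in>Pow {..<n}. q U * (\<Prod>i\<in>U - T. a i) *
            (\<Prod>i\<in>T. \<Sum>v\<in>{-1,1}. w v * (if i \<in> U then a i + t * v else 1)))"
  proof (intro sum.cong refl)
    fix U
    have "(\<Sum>s\<in>T \<rightarrow>\<^sub>E {-1,1}. \<Prod>i\<in>T. w (s i) * (if i \<in> U then a i + t * s i else 1))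
        = (\<Prod>i\<in>T. \<Sum>v\<in>{-1,1}. w v * (if i \<in> U then a i + t * v else 1))"
      by (rule prod_sum_PiE[symmetric]) (use T in auto)
    then show "(\<Sum>s\<in>T \<rightarrow>\<^sub>E {-1,1}. q U * (\<Prod>i\<in>U - T. a i) *
            (\<Prod>i\<in>T. w (s i) * (if i \<in> U then a i + t * s i else 1)))
        = q U * (\<Prod>i\<in>U - T. a i) *
            (\<Prod>i\<in>T. \<Sum>v\<in>{-1,1}. w v * (if i \<in> U then a i + t * v else 1))"
      by (simp add: sum_distrib_left[symmetric])
  qed
  finally show ?thesis .
qed

lemma sum_cube_vertices_eval:
  assumes T: "finite T"
  shows "(\<Sum>s\<in>T \<rightarrow>\<^sub>E {-1,1}. mlpoly_eval n q (cube_vertex a T t s))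
       = 2 ^ card T * mlpoly_eval n q a"
proof -
  have vertex_factor:
    "(\<Prod>i\<in>U - T. a i) * (\<Prod>i\<in>T. \<Sum>v\<in>{-1,1}. if i \<in> U then a i + t * v else 1)
     = 2 ^ card T * (\<Prod>i\<in>U. a i)" if U: "U \<subseteq> {..<n}" for U
  proof -
    have "(\<Prod>i\<in>T. \<Sum>v\<in>{-1,1::real}. if i \<in> U then a i + t * v else 1)
        = (\<Prod>i\<in>T. 2 * (if i \<in> U then a i else 1))"
      by (intro prod.cong refl) auto
    also have "\<dots> = 2 ^ card T * (\<Prod>i\<in>{i\<in>T. i \<in> U}. a i)"
      by (simp add: prod.distrib prod.inter_filter[OF T])
    also have "{i\<in>T. i \<in> U} = U \<inter> T" by auto
    finally show ?thesis
      using prod.Int_Diff[OF finite_subset[OF U finite_lessThan], of a T] by simp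
  qed
  have "(\<Sum>s\<in>T \<rightarrow>\<^sub>E {-1,1}. mlpoly_eval n q (cube_vertex a T t s))
      = (\<Sum>U\<in>Pow {..<n}. q U * ((\<Prod>i\<in>U - T. a i) *
            (\<Prod>i\<in>T. \<Sum>v\<in>{-1,1}. if i \<in> U then a i + t * v else 1)))"
    using sum_cube_vertices_weighted[OF T, of "\<lambda>_. 1" n q a t] by (simp add: mult.assoc)
  also have "\<dots> = 2 ^ card T * mlpoly_eval n q a"
    unfolding mlpoly_eval_def sum_distrib_left
    by (intro sum.cong refl) (simp only: Pow_iff vertex_factor mult.left_commute)
  finally show ?thesis .
qed

lemma sum_cube_vertices_signed_eval:
  assumes T: "T \<subseteq> {..<n}" and maximal: "\<forall>U\<in>Pow {..<n}. T \<subset> U \<longrightarrow> q U = 0"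
  shows "(\<Sum>s\<in>T \<rightarrow>\<^sub>E {-1,1}. (\<Prod>i\<in>T. s i) * mlpoly_eval n q (cube_vertex a T t s))
       = (2 * t) ^ card T * q T"
proof -
  have fin: "finite T" using T finite_subset by blast
  have vertex_factor: "(\<Prod>i\<in>T. \<Sum>v\<in>{-1,1}. v * (if i \<in> U then a i + t * v else 1))
      = (if T \<subseteq> U then (2 * t) ^ card T else 0)" for U
  proof -
    have "(\<Prod>i\<in>T. \<Sum>v\<in>{-1,1}. v * (if i \<in> U then a i + t * v else 1))
        = (\<Prod>i\<in>T. if i \<in> U then 2 * t else 0)"
      by (intro prod.cong refl) (simp add: algebra_simps)
    also have "\<dots> = (if T \<subseteq> U then (2 * t) ^ card T else 0)"
      using fin by (auto simp: subset_eq)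
    finally show ?thesis .
  qed
  have "(\<Sum>s\<in>T \<rightarrow>\<^sub>E {-1,1}. (\<Prod>i\<in>T. s i) * mlpoly_eval n q (cube_vertex a T t s))
      = (\<Sum>U\<in>Pow {..<n}. q U * (\<Prod>i\<in>U - T. a i) * (if T \<subseteq> U then (2 * t) ^ card T else 0))"
    using sum_cube_vertices_weighted[OF fin, of "\<lambda>v. v" n q a t] by (simp only: vertex_factor)
  also have "\<dots> = (\<Sum>U\<in>{T}. q U * (\<Prod>i\<in>U - T. a i) * (if T \<subseteq> U then (2 * t) ^ card T else 0))"
    by (rule sum.mono_neutral_right) (use T maximal in \<open>auto simp: psubset_eq\<close>)
  finally show ?thesis by simp
qed

lemma sum_sign_products_eq_0:
  assumes "finite T" "T \<noteq> {}"
  shows "(\<Sum>s\<in>T \<rightarrow>\<^sub>E {-1,1::real}. \<Prod>i\<in>T. s i) = 0"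
proof -
  have "(\<Sum>s\<in>T \<rightarrow>\<^sub>E {-1,1::real}. \<Prod>i\<in>T. s i) = (\<Prod>i\<in>T. \<Sum>v\<in>{-1,1::real}. v)"
    by (rule prod_sum_PiE[symmetric]) (use assms in auto)
  also have "\<dots> = 0" using assms by (simp add: card_gt_0_iff)
  finally show ?thesis .
qed

lemma mlpoly_coeff_eq_0_if_min_on_cube:
  assumes T: "T \<subseteq> {..<n}" "T \<noteq> {}"
    and maximal: "\<forall>U\<in>Pow {..<n}. T \<subset> U \<longrightarrow> q U = 0"
    and "t \<noteq> 0"
    and minimum: "\<And>s. s \<in> T \<rightarrow>\<^sub>E {-1,1} \<Longrightarrow> mlpoly_eval n q a \<le> mlpoly_eval n q (cube_vertex a T t s)"
  shows "q T = 0"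
proof -
  let ?G = "mlpoly_eval n q" and ?S = "T \<rightarrow>\<^sub>E {-1,1::real}"
  have fin: "finite T" using T(1) finite_subset by blast
  then have "finite ?S" by (simp add: finite_PiE)
  have "card ?S = 2 ^ card T" using fin by (simp add: card_PiE numeral_2_eq_2)
  then have zero: "(\<Sum>s\<in>?S. ?G (cube_vertex a T t s) - ?G a) = 0"
    by (simp add: sum_subtractf sum_cube_vertices_eval[OF fin])
  have nonneg: "0 \<le> ?G (cube_vertex a T t s) - ?G a" if "s \<in> ?S" for s
    using minimum[OF that] by simp
  have "\<forall>s\<in>?S. ?G (cube_vertex a T t s) - ?G a = 0"
    by (rule iffD1[OF sum_nonneg_eq_0_iff[OF \<open>finite ?S\<close> nonneg] zero])
  then have const: "?G (cube_vertex a T t s) = ?G a" if "s \<in> ?S" for s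
    using that by simp
  have "(2 * t) ^ card T * q T = (\<Sum>s\<in>?S. (\<Prod>i\<in>T. s i) * ?G (cube_vertex a T t s))"
    by (rule sum_cube_vertices_signed_eval[OF T(1) maximal, symmetric])
  also have "\<dots> = (\<Sum>s\<in>?S. \<Prod>i\<in>T. s i) * ?G a"
    unfolding sum_distrib_right by (intro sum.cong refl) (simp add: const)
  also have "\<dots> = 0" by (simp add: sum_sign_products_eq_0[OF fin T(2)])
  finally show ?thesis using \<open>t \<noteq> 0\<close> by simp
qed

lemma cube_vertices_near_in_box:
  assumes a: "a \<in> box n" and T: "T \<subseteq> {..<n}" "T \<noteq> {}"
    and interior: "\<forall>i\<in>T. \<bar>a i\<bar> < 1" and "\<delta> > 0"
  obtains t where "t > 0"
    and "\<And>s. s \<in> T \<rightarrow>\<^sub>E {-1,1::real} \<Longrightarrow> cube_vertex a T t s \<in> box n"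
    and "\<And>s. s \<in> T \<rightarrow>\<^sub>E {-1,1::real} \<Longrightarrow> sqdist n a (cube_vertex a T t s) \<le> \<delta>"
proof -
  have fin: "finite T" using T(1) finite_subset by blast
  then have card: "card T > 0" using T(2) by (simp add: card_gt_0_iff)
  define t where "t = min (sqrt (\<delta> / card T)) (Min ((\<lambda>i. 1 - \<bar>a i\<bar>) ` T))"
  have "sqrt (\<delta> / card T) > 0" using \<open>\<delta> > 0\<close> card by simp
  moreover have "Min ((\<lambda>i. 1 - \<bar>a i\<bar>) ` T) > 0"
    using fin T(2) interior by (simp add: Min_gr_iff)
  ultimately have "t > 0" by (simp add: t_def)
  have margin: "t \<le> 1 - \<bar>a i\<bar>" if "i \<in> T" for i
    unfolding t_def using fin that by (auto intro: min.coboundedI2 Min_le)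
  have "card T * t\<^sup>2 \<le> card T * (sqrt (\<delta> / card T))\<^sup>2"
    using \<open>t > 0\<close> by (intro mult_left_mono power_mono) (auto simp: t_def)
  also have "\<dots> = \<delta>" using \<open>\<delta> > 0\<close> card by simp
  finally have radius: "card T * t\<^sup>2 \<le> \<delta>" .
  show ?thesis
  proof (rule that[OF \<open>t > 0\<close>])
    fix s assume s: "s \<in> T \<rightarrow>\<^sub>E {-1,1::real}"
    then have sign: "s i = -1 \<or> s i = 1" if "i \<in> T" for i using that by auto
    show "cube_vertex a T t s \<in> box n"
      unfolding box_def
    proof (intro CollectI allI impI)
      fix i assume "i < n"
      show "-1 \<le> cube_vertex a T t s i \<and> cube_vertex a T t s i \<le> 1"
      proof (cases "i \<in> T")
        case True
        with margin[OF True] sign[OF True] \<open>t > 0\<close> show ?thesis by (auto simp: cube_vertex_def)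
      next
        case False
        with a \<open>i < n\<close> show ?thesis by (simp add: cube_vertex_def box_def)
      qed
    qed
    have "sqdist n a (cube_vertex a T t s) = (\<Sum>i<n. if i \<in> T then t\<^sup>2 else 0)"
      unfolding sqdist_def
    proof (intro sum.cong refl)
      fix i
      show "(a i - cube_vertex a T t s i)\<^sup>2 = (if i \<in> T then t\<^sup>2 else 0)"
        using sign[of i] by (cases "i \<in> T") (auto simp: cube_vertex_def power2_eq_square)
    qed
    also have "\<dots> = card T * t\<^sup>2" using T(1) by (simp add: sum.If_cases Int_absorb1)
    finally show "sqdist n a (cube_vertex a T t s) \<le> \<delta>" using radius by simp
  qed
qed

lemma exists_maximal_monomial:
  fixes q :: mlpoly
  assumes "T \<subseteq> {..<n}" "q T \<noteq> 0"
  obtains M where "M \<subseteq> {..<n}" "T \<subseteq> M" "q M \<noteq> 0"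
    and "\<forall>U\<in>Pow {..<n}. M \<subset> U \<longrightarrow> q U = 0"
proof -
  obtain M where M: "M \<subseteq> {..<n}" "T \<subseteq> M" "q M \<noteq> 0"
    and max: "\<forall>U. U \<subseteq> {..<n} \<and> q U \<noteq> 0 \<longrightarrow> M \<subseteq> U \<longrightarrow> M = U"
    using finite_has_maximal2[of "{U\<in>Pow {..<n}. q U \<noteq> 0}" T] assms by auto
  have "\<forall>U\<in>Pow {..<n}. M \<subset> U \<longrightarrow> q U = 0"
    using max by blast
  with M show ?thesis by (rule that)
qed

lemma abs_lt_1_if_not_fixed:
  assumes "a \<in> box n" "i < n" "i \<notin> fixed_coords n a"
  shows "\<bar>a i\<bar> < 1"
  using assms by (force simp: fixed_coords_def box_def)

theorem local_min_in_box_imp_feasible: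
  assumes "local_min_in n (mlpoly_eval n p) (box n) a"
  shows "feasible n p a"
proof -
  define I where "I = fixed_coords n a"
  define q where "q = mlpoly_subst n p I a"
  from assms obtain \<delta> where a: "a \<in> box n" and "\<delta> > 0" and local_min:
    "\<And>x. x \<in> box n \<Longrightarrow> sqdist n a x \<le> \<delta> \<Longrightarrow> mlpoly_eval n p a \<le> mlpoly_eval n p x"
    unfolding local_min_in_def by blast
  have I: "I \<subseteq> {..<n}" by (auto simp: I_def fixed_coords_def)
  have "q T = 0" if T: "T \<subseteq> {..<n}" "T \<noteq> {}" for T
  proof (rule ccontr)
    assume "q T \<noteq> 0"
    then obtain M where M: "M \<subseteq> {..<n}" "T \<subseteq> M" "q M \<noteq> 0"
      and maximal: "\<forall>U\<in>Pow {..<n}. M \<subset> U \<longrightarrow> q U = 0"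
      using exists_maximal_monomial T(1) by blast
    have "M \<inter> I = {}"
      using M(3) by (auto simp: q_def mlpoly_subst_def split: if_splits)
    then have "\<forall>i\<in>M. \<bar>a i\<bar> < 1"
      using abs_lt_1_if_not_fixed[OF a] M(1) by (auto simp: I_def)
    then obtain t where "t > 0"
      and near: "\<And>s. s \<in> M \<rightarrow>\<^sub>E {-1,1} \<Longrightarrow> cube_vertex a M t s \<in> box n"
                "\<And>s. s \<in> M \<rightarrow>\<^sub>E {-1,1} \<Longrightarrow> sqdist n a (cube_vertex a M t s) \<le> \<delta>"
      using cube_vertices_near_in_box[OF a M(1)] T(2) M(2) \<open>\<delta> > 0\<close> by blast
    have min_on_cube: "mlpoly_eval n q a \<le> mlpoly_eval n q (cube_vertex a M t s)"
      if "s \<in> M \<rightarrow>\<^sub>E {-1,1}" for s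
    proof -
      have "\<forall>i\<in>I. cube_vertex a M t s i = a i"
        using \<open>M \<inter> I = {}\<close> by (auto simp: cube_vertex_def)
      then show ?thesis
        using local_min[OF near[OF that]] by (simp add: q_def mlpoly_eval_subst[OF I])
    qed
    have "M \<noteq> {}" using T(2) M(2) by blast
    then have "q M = 0"
      using mlpoly_coeff_eq_0_if_min_on_cube[OF M(1) _ maximal, of t a] min_on_cube \<open>t > 0\<close>
      by simp
    with M(3) show False ..
  qed
  then show ?thesis using a by (simp add: feasible_def mlpoly_const_def q_def I_def)
qed

theorem lemma6:
  fixes n :: nat and f :: "clause list" and a :: "nat \<Rightarrow> real"
  assumes "\<forall>c\<in>set f. clause_vars c \<subseteq> {..<n}"
    and "a \<in> box n"
    and "local_min_in n (F_eval n f) (box n) a"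
  shows "feasible n (formula_poly n f) a"
  using local_min_in_box_imp_feasible assms(3) unfolding F_eval_def[abs_def] .

end
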